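(* Fix a base $B>1$ and integers $1\le d\le m$. Let $\mathfrak{B}_0$ be a fixed $m$-dimensional box and let $\mathfrak{B}_0\supset\mathfrak{B}_1\supset\cdots$ be a linear-fragmentation process whose proportion cuts $P_1,\dots,P_m$ have probability density functions $f_i:(0,1)\to(0,\infty)$. Let $V_d^{(n)}:=\mathrm{Vol}_d(\mathfrak{B}_n)$, and let $\mathfrak{m}_d^{(n)}:=\max_{I}\prod_{i\in I}S_i^{(n)}$, the maximum over all subsets $I\subset\{1,\dots,m\}$ with $|I|=d$, where $S_1^{(n)},\dots,S_m^{(n)}$ are the side lengths of $\mathfrak{B}_n$. If the sequence $\mathfrak{m}_d^{(n)}$ converges to strong Benford behavior in base $B$, then the sequence $V_d^{(n)}$ converges to strong Benford behavior in base $B$ as $n\to\infty$.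
   Context: Significand: for $x>0$ and base $B>1$, $S_B(x)$ is the unique number in $[1,B)$ such that $\log_B x-\log_B S_B(x)$ is an integer. A sequence of positive random variables $X^{(n)}$ converges to strong Benford behavior in base $B$ if $\mathbb{P}(S_B(X^{(n)})\le D)\to\log_B D$ for every $D\in[1,B]$. An $m$-dimensional box is a set $[a_1,b_1]\times\cdots\times[a_m,b_m]\subset\mathbb{R}^m$ with finite $a_i<b_i$; its side lengths are $b_i-a_i$. For a box $\mathfrak{B}=\prod_i[a_i,b_i]$ and $1\le d\le m$, its $d$-volume is $\mathrm{Vol}_d(\mathfrak{B}):=2^{m-d}\sum_{|I|=d}\prod_{i\in I}(b_i-a_i)$, summing over all $I\subset\{1,\dots,m\}$ with $|I|=d$. A linear-fragmentation process is a sequence of random $m$-dimensional boxes $\mathfrak{B}_0\supset\mathfrak{B}_1\supset\cdots$ such that, conditionally on $\mathfrak{B}_n$, the box $\mathfrak{B}_{n+1}$ is obtained by multiplying the $i$-th side length of $\mathfrak{B}_n$ by a proportion cut, where at each step $n\ge1$ fresh independent proportion cuts $P_1^{(n)},\dots,P_m^{(n)}\in(0,1)$ are drawn, independent across $i$ and $n$, with $P_i^{(n)}$ distributed as a fixed continuous random variable $P_i$ (the same for all $n$). Thus the side lengths of $\mathfrak{B}_n$ are $S_i^{(n)}=P_i^{(0)}\prod_{t=1}^nP_i^{(t)}$, where $P_i^{(0)}$ denotes the $i$-th side length of $\mathfrak{B}_0$. It is assumed that $\log_B P_i$ has finite mean, variance and third absolute moment, and that $\mathbb{E}[\log_B P_i]=\mu_P\in\mathbb{R}$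 and $\mathrm{Var}[\log_B P_i]=\sigma_P^2>0$ are the same for all $1\le i\le m$. *)

theory Defs
  imports "HOL-Probability.Probability"
begin

definition significand :: "real \<Rightarrow> real \<Rightarrow> real" where
  "significand B x = x / B powr (real_of_int \<lfloor>log B x\<rfloor>)"

definition strong_benford :: "'a measure \<Rightarrow> real \<Rightarrow> (nat \<Rightarrow> 'a \<Rightarrow> real) \<Rightarrow> bool" where
  "strong_benford M B X \<longleftrightarrow>
     (\<forall>D\<in>{1..B}. (\<lambda>n. measure M {\<omega>\<in>space M. significand B (X n \<omega>) \<le> D}) \<longlonglongrightarrow> log B D)"

definition vol_d :: "nat \<Rightarrow> nat \<Rightarrow> (nat \<Rightarrow> real) \<Rightarrow> real" where
  "vol_d m d s = 2 ^ (m - d) * (\<Sum>I\<in>{I. I \<subseteq> {1..m} \<and> card I = d}. \<Prod>i\<in>I. s i)"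

definition max_d :: "nat \<Rightarrow> nat \<Rightarrow> (nat \<Rightarrow> real) \<Rightarrow> real" where
  "max_d m d s = Max ((\<lambda>I. \<Prod>i\<in>I. s i) ` {I. I \<subseteq> {1..m} \<and> card I = d})"

definition side :: "(nat \<Rightarrow> real) \<Rightarrow> (nat \<Rightarrow> real) \<Rightarrow> (nat \<Rightarrow> nat \<Rightarrow> 'a \<Rightarrow> real)
    \<Rightarrow> nat \<Rightarrow> 'a \<Rightarrow> nat \<Rightarrow> real" where
  "side a b P n \<omega> i = (b i - a i) * (\<Prod>t\<in>{1..n}. P i t \<omega>)"

end

theory Submission
  imports Defs
begin

text \<open>
  Write \<open>S I\<close> for the product of the side lengths indexed by a \<open>d\<close>-set \<open>I\<close>: the \<open>d\<close>-volume is
  \<open>2^(m-d)\<close> times the sum of the \<open>S I\<close>, and \<open>max_d\<close> is their maximum. Strong Benford behaviour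
  of \<open>X\<close> means that \<open>log B X\<close> is uniformly distributed modulo one, and this survives adding a
  constant and adding a nonnegative perturbation that tends to zero in probability. The gap
  between the logarithms of the sum and of the maximum is such a perturbation: for \<open>I \<noteq> J\<close> the
  log-ratio of \<open>S I\<close> and \<open>S J\<close> is a constant plus a random walk whose i.i.d. steps (the signed
  sums of \<open>log B P\<^sub>i\<close> over the symmetric difference of \<open>I\<close> and \<open>J\<close>) have mean zero, as
  \<open>|I| = |J|\<close>, and positive variance. By the central limit theorem the walk leaves every bounded
  interval with probability tending to one, so a single product eventually dominates the sum.
\<close>

section \<open>Anti-concentration of random walks\<close>

lemma isCont_std_normal_cdf: "isCont (cdf std_normal_distribution) x"
proof -
  have "emeasure std_normal_distribution {x} = 0"
    by (subst emeasure_density) (auto intro!: nn_integral_null_set)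
  then show ?thesis using real_dist_normal_dist
    by (simp add: finite_borel_measure.isCont_cdf real_distribution.finite_borel_measure_M measure_def)
qed

lemma exists_pos_symmetric_increment_less:
  fixes \<Phi> :: "real \<Rightarrow> real"
  assumes "isCont \<Phi> 0" "a > 0"
  obtains e where "e > 0" "\<Phi> e - \<Phi> (- e) < a"
proof -
  have "(\<lambda>e. - e) \<midarrow>0\<rightarrow> (0::real)"
    using tendsto_minus[OF tendsto_ident_at, of 0 UNIV] by simp
  then have "(\<lambda>e. \<Phi> e - \<Phi> (- e)) \<midarrow>0\<rightarrow> \<Phi> 0 - \<Phi> 0"
    by (intro tendsto_diff isCont_tendsto_compose[OF assms(1)] tendsto_ident_at)
  then have "((\<lambda>e. \<Phi> e - \<Phi> (- e)) \<longlongrightarrow> 0) (at_right 0)"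
    by (simp add: filterlim_at_split)
  then have "\<forall>\<^sub>F e in at_right 0. e > 0 \<and> \<Phi> e - \<Phi> (- e) < a"
    using order_tendstoD(2) assms(2) eventually_at_right_less by (fastforce intro: eventually_conj)
  then obtain e where "e > 0 \<and> \<Phi> e - \<Phi> (- e) < a"
    using eventually_happens trivial_limit_at_right_real by blast
  then show ?thesis
    using that by blast
qed

lemma (in prob_space) tendsto_prob_abs_shifted_le_zero:
  fixes Z :: "nat \<Rightarrow> 'a \<Rightarrow> real" and q :: "nat \<Rightarrow> real"
  assumes [measurable]: "\<And>n. Z n \<in> borel_measurable M"
    and q: "filterlim q at_top sequentially"
    and cdf: "\<And>y. (\<lambda>n. prob {\<omega>\<in>space M. Z n \<omega> / q n \<le> y}) \<longlonglongrightarrow> \<Phi> y"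
    and \<Phi>: "isCont \<Phi> 0"
  shows "(\<lambda>n. prob {\<omega>\<in>space M. \<bar>c + Z n \<omega>\<bar> \<le> K}) \<longlonglongrightarrow> 0"
proof (rule order_tendstoI)
  fix a :: real assume "a < 0"
  then show "\<forall>\<^sub>F n in sequentially. a < prob {\<omega>\<in>space M. \<bar>c + Z n \<omega>\<bar> \<le> K}"
    by (intro always_eventually allI less_le_trans[OF _ measure_nonneg])
next
  fix a :: real assume "0 < a"
  then obtain e where e: "e > 0" "\<Phi> e - \<Phi> (- e) < a"
    using exists_pos_symmetric_increment_less[OF \<Phi>] by blast
  define F where "F n y = prob {\<omega>\<in>space M. Z n \<omega> / q n \<le> y}" for n y
  have "\<forall>\<^sub>F n in sequentially. F n e - F n (- e) < a"
    using order_tendstoD(2)[OF tendsto_diff[OF cdf cdf] e(2)] unfolding F_def .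
  moreover have "\<forall>\<^sub>F n in sequentially. (\<bar>c\<bar> + \<bar>K\<bar>) / q n < e"
    using order_tendstoD(2)[OF tendsto_divide_0[OF tendsto_const filterlim_at_top_imp_at_infinity[OF q]] e(1)] .
  moreover have "\<forall>\<^sub>F n in sequentially. q n > 0"
    using q by (simp add: filterlim_at_top_dense)
  ultimately show "\<forall>\<^sub>F n in sequentially. prob {\<omega>\<in>space M. \<bar>c + Z n \<omega>\<bar> \<le> K} < a"
  proof eventually_elim
    case (elim n)
    have "{\<omega>\<in>space M. \<bar>c + Z n \<omega>\<bar> \<le> K} \<subseteq>
        {\<omega>\<in>space M. Z n \<omega> / q n \<le> e} - {\<omega>\<in>space M. Z n \<omega> / q n \<le> - e}"
    proof safe
      fix \<omega> assume "\<bar>c + Z n \<omega>\<bar> \<le> K"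
      then have "\<bar>Z n \<omega>\<bar> / q n \<le> (\<bar>c\<bar> + \<bar>K\<bar>) / q n"
        using elim by (intro divide_right_mono) auto
      then have "\<bar>Z n \<omega> / q n\<bar> < e"
        using elim by (simp add: abs_div)
      then show "Z n \<omega> / q n \<le> e" "Z n \<omega> / q n \<le> - e \<Longrightarrow> False"
        by linarith+
    qed
    then have "prob {\<omega>\<in>space M. \<bar>c + Z n \<omega>\<bar> \<le> K} \<le>
        prob ({\<omega>\<in>space M. Z n \<omega> / q n \<le> e} - {\<omega>\<in>space M. Z n \<omega> / q n \<le> - e})"
      by (intro finite_measure_mono) measurable
    also have "\<dots> = F n e - F n (- e)"
      unfolding F_def using e by (subst finite_measure_Diff) (auto intro!: arg_cong[where f=prob])
    finally show ?case
      using elim by linarith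
  qed
qed

lemma (in prob_space)
  fixes g :: "real \<Rightarrow> real"
  assumes "distr M borel X = distr M borel Y"
    and [measurable]: "random_variable borel X" "random_variable borel Y" "g \<in> borel_measurable borel"
  shows integrable_eq_of_distr_eq: "integrable M (\<lambda>\<omega>. g (X \<omega>)) \<longleftrightarrow> integrable M (\<lambda>\<omega>. g (Y \<omega>))"
    and expectation_eq_of_distr_eq: "expectation (\<lambda>\<omega>. g (X \<omega>)) = expectation (\<lambda>\<omega>. g (Y \<omega>))"
proof -
  show "integrable M (\<lambda>\<omega>. g (X \<omega>)) \<longleftrightarrow> integrable M (\<lambda>\<omega>. g (Y \<omega>))"
    using assms(1) integrable_distr_eq[of X M borel g] integrable_distr_eq[of Y M borel g] by simp
  show "expectation (\<lambda>\<omega>. g (X \<omega>)) = expectation (\<lambda>\<omega>. g (Y \<omega>))"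
    using assms(1) integral_distr[of X M borel g] integral_distr[of Y M borel g] by simp
qed

lemma (in prob_space) tendsto_prob_abs_shifted_sum_le_zero:
  fixes X :: "nat \<Rightarrow> 'a \<Rightarrow> real"
  assumes indep: "indep_vars (\<lambda>_. borel) X UNIV"
    and distr: "\<And>n. distr M borel (X n) = distr M borel (X 0)"
    and sq: "integrable M (\<lambda>\<omega>. (X 0 \<omega>)\<^sup>2)"
    and mean: "expectation (X 0) = 0"
    and var: "variance (X 0) > 0"
  shows "(\<lambda>n. prob {\<omega>\<in>space M. \<bar>c + (\<Sum>t<n. X t \<omega>)\<bar> \<le> K}) \<longlonglongrightarrow> 0"
proof -
  define s where "s = sqrt (variance (X 0))"
  have s: "s > 0"
    using var by (simp add: s_def)
  have [measurable]: "X n \<in> borel_measurable M" for n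
    using indep unfolding indep_vars_def2 by simp
  have sqn: "integrable M (\<lambda>\<omega>. (X n \<omega>)\<^sup>2)" for n
    using sq integrable_eq_of_distr_eq[OF distr, of n "\<lambda>x. x\<^sup>2"] by simp
  have meann: "expectation (X n) = 0" for n
    using mean expectation_eq_of_distr_eq[OF distr _ _ measurable_ident_sets[OF refl], of n] by simp
  have varn: "variance (X n) = s\<^sup>2" for n
    using var expectation_eq_of_distr_eq[OF distr, of n "\<lambda>x. x\<^sup>2"] by (simp add: meann mean s_def)
  have clt: "weak_conv_m (\<lambda>n. distr M borel (\<lambda>\<omega>. (\<Sum>t<n. X t \<omega>) / sqrt (n * s\<^sup>2)))
      std_normal_distribution"
    by (rule central_limit_theorem_zero_mean[OF indep meann s sqn varn distr])
  have cdf_conv: "(\<lambda>n. prob {\<omega>\<in>space M. (\<Sum>t<n. X t \<omega>) / sqrt (n * s\<^sup>2) \<le> y})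
      \<longlonglongrightarrow> cdf std_normal_distribution y" for y
  proof -
    have "cdf (distr M borel (\<lambda>\<omega>. (\<Sum>t<n. X t \<omega>) / sqrt (n * s\<^sup>2))) y =
        prob {\<omega>\<in>space M. (\<Sum>t<n. X t \<omega>) / sqrt (n * s\<^sup>2) \<le> y}" for n
      unfolding cdf_def by (subst measure_distr) (auto simp: vimage_def Int_def conj_commute)
    moreover have "(\<lambda>n. cdf (distr M borel (\<lambda>\<omega>. (\<Sum>t<n. X t \<omega>) / sqrt (n * s\<^sup>2))) y)
        \<longlonglongrightarrow> cdf std_normal_distribution y"
      using clt isCont_std_normal_cdf unfolding weak_conv_m_def weak_conv_def by blast
    ultimately show ?thesis
      by simp
  qed
  have "filterlim (\<lambda>n. s * sqrt (real n)) at_top sequentially"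
    using s by (intro filterlim_tendsto_pos_mult_at_top[OF tendsto_const]
        filterlim_compose[OF sqrt_at_top filterlim_real_sequentially])
  moreover have "sqrt (real n * s\<^sup>2) = s * sqrt (real n)" for n
    using s by (simp add: real_sqrt_mult)
  ultimately have "filterlim (\<lambda>n. sqrt (real n * s\<^sup>2)) at_top sequentially"
    by simp
  then show ?thesis
    using cdf_conv isCont_std_normal_cdf by (rule tendsto_prob_abs_shifted_le_zero[rotated]) simp
qed

section \<open>Uniform distribution modulo one\<close>

lemma borel_measurable_frac [measurable]:
  fixes f :: "'a \<Rightarrow> real"
  assumes [measurable]: "f \<in> borel_measurable M"
  shows "(\<lambda>x. frac (f x)) \<in> borel_measurable M"
  unfolding frac_def by measurable

definition uniform_mod_one :: "'a measure \<Rightarrow> (nat \<Rightarrow> 'a \<Rightarrow> real) \<Rightarrow> bool" where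
  "uniform_mod_one M Y \<longleftrightarrow>
     (\<forall>t\<in>{0..1}. (\<lambda>n. measure M {\<omega>\<in>space M. frac (Y n \<omega>) \<le> t}) \<longlonglongrightarrow> t)"

text \<open>The distribution function of the uniform law on \<open>[0, 1]\<close>.\<close>

definition unit_clamp :: "real \<Rightarrow> real" where
  "unit_clamp x = max 0 (min x 1)"

lemma (in prob_space) uniform_mod_one_tendsto_le:
  assumes "uniform_mod_one M Y"
  shows "(\<lambda>n. prob {\<omega>\<in>space M. frac (Y n \<omega>) \<le> x}) \<longlonglongrightarrow> unit_clamp x"
proof -
  consider "x < 0" | "x \<ge> 1" | "x \<in> {0..1}"
    by fastforce
  then show ?thesis
  proof cases
    case 1
    then have "{\<omega>\<in>space M. frac (Y n \<omega>) \<le> x} = {}" for n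
      using frac_ge_0 by (smt (verit) Collect_empty_eq)
    then have "prob {\<omega>\<in>space M. frac (Y n \<omega>) \<le> x} = 0" for n
      by (simp only: measure_empty)
    then show ?thesis
      using 1 by (simp add: unit_clamp_def)
  next
    case 2
    then have "{\<omega>\<in>space M. frac (Y n \<omega>) \<le> x} = space M" for n
      using frac_lt_1 by (smt (verit) Collect_mem_eq Collect_cong)
    then show ?thesis
      using 2 by (simp add: unit_clamp_def prob_space)
  next
    case 3
    then show ?thesis
      using assms by (auto simp: uniform_mod_one_def unit_clamp_def)
  qed
qed

lemma (in prob_space) uniform_mod_one_tendsto_less:
  assumes "uniform_mod_one M Y" and [measurable]: "\<And>n. Y n \<in> borel_measurable M"
  shows "(\<lambda>n. prob {\<omega>\<in>space M. frac (Y n \<omega>) < x}) \<longlonglongrightarrow> unit_clamp x"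
proof (rule order_tendstoI)
  fix a assume a: "a < unit_clamp x"
  show "\<forall>\<^sub>F n in sequentially. a < prob {\<omega>\<in>space M. frac (Y n \<omega>) < x}"
  proof (cases "a < 0")
    case True
    then show ?thesis
      by (intro always_eventually allI less_le_trans[OF _ measure_nonneg])
  next
    case False
    define y where "y = (a + unit_clamp x) / 2"
    have "a < unit_clamp y" "y < x"
      using a False unfolding y_def unit_clamp_def by (auto simp: max_def min_def split: if_splits)
    from order_tendstoD(1)[OF uniform_mod_one_tendsto_le[OF assms(1)] this(1)]
    show ?thesis
    proof eventually_elim
      case (elim n)
      have "prob {\<omega>\<in>space M. frac (Y n \<omega>) \<le> y} \<le> prob {\<omega>\<in>space M. frac (Y n \<omega>) < x}"
        using \<open>y < x\<close> by (intro finite_measure_mono) auto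
      with elim show ?case
        by linarith
    qed
  qed
next
  fix a assume "unit_clamp x < a"
  from order_tendstoD(2)[OF uniform_mod_one_tendsto_le[OF assms(1)] this]
  show "\<forall>\<^sub>F n in sequentially. prob {\<omega>\<in>space M. frac (Y n \<omega>) < x} < a"
  proof eventually_elim
    case (elim n)
    have "prob {\<omega>\<in>space M. frac (Y n \<omega>) < x} \<le> prob {\<omega>\<in>space M. frac (Y n \<omega>) \<le> x}"
      by (intro finite_measure_mono) auto
    with elim show ?case
      by linarith
  qed
qed

lemma (in prob_space) uniform_mod_one_cong:
  assumes "uniform_mod_one M Y" "\<And>n \<omega>. \<omega> \<in> space M \<Longrightarrow> Z n \<omega> = Y n \<omega>"
  shows "uniform_mod_one M Z"
proof -
  have "{\<omega>\<in>space M. frac (Z n \<omega>) \<le> t} = {\<omega>\<in>space M. frac (Y n \<omega>) \<le> t}" for n t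
    using assms(2) by auto
  then show ?thesis
    using assms(1) unfolding uniform_mod_one_def by simp
qed

lemma (in prob_space) uniform_mod_one_add_const:
  assumes "uniform_mod_one M Y" and [measurable]: "\<And>n. Y n \<in> borel_measurable M"
  shows "uniform_mod_one M (\<lambda>n \<omega>. Y n \<omega> + c)"
  unfolding uniform_mod_one_def
proof
  fix t :: real assume t: "t \<in> {0..1}"
  show "(\<lambda>n. prob {\<omega>\<in>space M. frac (Y n \<omega> + c) \<le> t}) \<longlonglongrightarrow> t"
  proof (cases "t = 1")
    case True
    then have "{\<omega>\<in>space M. frac (Y n \<omega> + c) \<le> t} = space M" for n
      using frac_lt_1 by (smt (verit) Collect_mem_eq Collect_cong)
    then show ?thesis
      using True by (simp add: prob_space)
  next
    case False
    define c' where "c' = frac c"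
    have t1: "0 \<le> t" "t < 1" and c': "0 \<le> c'" "c' < 1"
      using t False by (auto simp: c'_def frac_lt_1)
    let ?F = "\<lambda>n x. prob {\<omega>\<in>space M. frac (Y n \<omega>) \<le> x}"
    let ?G = "\<lambda>n x. prob {\<omega>\<in>space M. frac (Y n \<omega>) < x}"
    \<comment> \<open>adding \<open>c\<close> rotates the circle: \<open>frac (y + c) \<le> t\<close> iff \<open>frac y\<close> lies in
        \<open>[0, t - c']\<close> or in \<open>[1 - c', t + 1 - c']\<close>\<close>
    have "prob {\<omega>\<in>space M. frac (Y n \<omega> + c) \<le> t} = ?F n (t - c') + (?F n (t + 1 - c') - ?G n (1 - c'))"
      for n
    proof -
      have eq: "{\<omega>\<in>space M. frac (Y n \<omega> + c) \<le> t} = {\<omega>\<in>space M. frac (Y n \<omega>) \<le> t - c'} \<union>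
          ({\<omega>\<in>space M. frac (Y n \<omega>) \<le> t + 1 - c'} - {\<omega>\<in>space M. frac (Y n \<omega>) < 1 - c'})"
        using t1 c' by (auto simp: frac_add c'_def)
      have sub: "{\<omega>\<in>space M. frac (Y n \<omega>) < 1 - c'} \<subseteq> {\<omega>\<in>space M. frac (Y n \<omega>) \<le> t + 1 - c'}"
        using t1 by auto
      show ?thesis
        unfolding eq using t1 c' by (subst finite_measure_Union)
          (auto simp: finite_measure_Diff[OF _ _ sub] intro!: arg_cong[where f=prob])
    qed
    moreover have "(\<lambda>n. ?F n (t - c') + (?F n (t + 1 - c') - ?G n (1 - c')))
        \<longlonglongrightarrow> unit_clamp (t - c') + (unit_clamp (t + 1 - c') - unit_clamp (1 - c'))"
      by (intro tendsto_add tendsto_diff uniform_mod_one_tendsto_le uniform_mod_one_tendsto_less assms)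
    moreover have "unit_clamp (t - c') + (unit_clamp (t + 1 - c') - unit_clamp (1 - c')) = t"
      using t1 c' unfolding unit_clamp_def by (auto simp: max_def min_def)
    ultimately show ?thesis
      by simp
  qed
qed

lemma frac_add_nonneg_le:
  fixes y e :: real
  assumes "0 \<le> e"
  shows "frac (y + e) \<le> frac y + e"
  using floor_mono[of y "y + e"] assms by (simp add: frac_def)

lemma frac_add_nonneg_eq:
  fixes y e :: real
  assumes "0 \<le> e" "frac y + e < 1"
  shows "frac (y + e) = frac y + e"
proof -
  have "e < 1"
    using assms frac_ge_0[of y] by linarith
  then have "frac e = e"
    using assms(1) by (simp add: frac_eq)
  then show ?thesis
    using assms(2) by (simp add: frac_add)
qed

lemma (in prob_space) prob_frac_le_diff_le:
  fixes Y E :: "'a \<Rightarrow> real"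
  assumes [measurable]: "Y \<in> borel_measurable M" "E \<in> borel_measurable M"
    and E: "\<And>\<omega>. \<omega> \<in> space M \<Longrightarrow> E \<omega> \<ge> 0"
  shows "prob {\<omega>\<in>space M. frac (Y \<omega>) \<le> t - \<eta>} \<le>
      prob {\<omega>\<in>space M. frac (Y \<omega> + E \<omega>) \<le> t} + prob {\<omega>\<in>space M. E \<omega> > \<eta>}"
proof -
  have "{\<omega>\<in>space M. frac (Y \<omega>) \<le> t - \<eta>} \<subseteq>
      {\<omega>\<in>space M. frac (Y \<omega> + E \<omega>) \<le> t} \<union> {\<omega>\<in>space M. E \<omega> > \<eta>}"
  proof safe
    fix \<omega> assume "\<omega> \<in> space M" "frac (Y \<omega>) \<le> t - \<eta>" "\<not> \<eta> < E \<omega>"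
    then show "frac (Y \<omega> + E \<omega>) \<le> t"
      using frac_add_nonneg_le[of "E \<omega>" "Y \<omega>"] E[of \<omega>] by linarith
  qed
  then have "prob {\<omega>\<in>space M. frac (Y \<omega>) \<le> t - \<eta>} \<le>
      prob ({\<omega>\<in>space M. frac (Y \<omega> + E \<omega>) \<le> t} \<union> {\<omega>\<in>space M. E \<omega> > \<eta>})"
    by (intro finite_measure_mono) measurable
  also have "\<dots> \<le> prob {\<omega>\<in>space M. frac (Y \<omega> + E \<omega>) \<le> t} + prob {\<omega>\<in>space M. E \<omega> > \<eta>}"
    by (intro measure_Un_le) measurable
  finally show ?thesis .
qed

lemma (in prob_space) prob_frac_add_le_le:
  fixes Y E :: "'a \<Rightarrow> real"
  assumes [measurable]: "Y \<in> borel_measurable M" "E \<in> borel_measurable M"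
    and E: "\<And>\<omega>. \<omega> \<in> space M \<Longrightarrow> E \<omega> \<ge> 0"
  shows "prob {\<omega>\<in>space M. frac (Y \<omega> + E \<omega>) \<le> t} \<le> prob {\<omega>\<in>space M. frac (Y \<omega>) \<le> t}
      + (1 - prob {\<omega>\<in>space M. frac (Y \<omega>) < 1 - \<eta>}) + prob {\<omega>\<in>space M. E \<omega> > \<eta>}"
proof -
  let ?A = "{\<omega>\<in>space M. frac (Y \<omega>) \<le> t}"
  let ?B = "space M - {\<omega>\<in>space M. frac (Y \<omega>) < 1 - \<eta>}"
  let ?C = "{\<omega>\<in>space M. E \<omega> > \<eta>}"
  have "{\<omega>\<in>space M. frac (Y \<omega> + E \<omega>) \<le> t} \<subseteq> (?A \<union> ?B) \<union> ?C"
  proof safe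
    fix \<omega> assume "\<omega> \<in> space M" "frac (Y \<omega> + E \<omega>) \<le> t" "\<not> \<eta> < E \<omega>"
      "frac (Y \<omega>) < 1 - \<eta>"
    then show "frac (Y \<omega>) \<le> t"
      using frac_add_nonneg_eq[of "E \<omega>" "Y \<omega>"] E[of \<omega>] by linarith
  qed
  then have "prob {\<omega>\<in>space M. frac (Y \<omega> + E \<omega>) \<le> t} \<le> prob ((?A \<union> ?B) \<union> ?C)"
    by (intro finite_measure_mono) measurable
  also have "\<dots> \<le> prob (?A \<union> ?B) + prob ?C"
    by (intro measure_Un_le) measurable
  also have "prob (?A \<union> ?B) \<le> prob ?A + prob ?B"
    by (intro measure_Un_le) measurable
  also have "prob ?B = 1 - prob {\<omega>\<in>space M. frac (Y \<omega>) < 1 - \<eta>}"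
    by (intro prob_compl) measurable
  finally show ?thesis
    by linarith
qed

lemma (in prob_space) uniform_mod_one_add_vanishing:
  assumes "uniform_mod_one M Y" and [measurable]: "\<And>n. Y n \<in> borel_measurable M" "\<And>n. E n \<in> borel_measurable M"
    and E_nonneg: "\<And>n \<omega>. \<omega> \<in> space M \<Longrightarrow> E n \<omega> \<ge> 0"
    and E_vanishing: "\<And>\<eta>. \<eta> > 0 \<Longrightarrow> (\<lambda>n. prob {\<omega>\<in>space M. E n \<omega> > \<eta>}) \<longlonglongrightarrow> 0"
  shows "uniform_mod_one M (\<lambda>n \<omega>. Y n \<omega> + E n \<omega>)"
  unfolding uniform_mod_one_def
proof (intro ballI order_tendstoI)
  fix t a :: real assume t: "t \<in> {0..1}" and "a < t"
  define \<eta> where "\<eta> = (t - a) / 2"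
  have \<eta>: "\<eta> > 0" "a < unit_clamp (t - \<eta>) - 0"
    using \<open>a < t\<close> t by (auto simp: \<eta>_def unit_clamp_def max_def min_def field_simps)
  have "(\<lambda>n. prob {\<omega>\<in>space M. frac (Y n \<omega>) \<le> t - \<eta>} - prob {\<omega>\<in>space M. E n \<omega> > \<eta>})
      \<longlonglongrightarrow> unit_clamp (t - \<eta>) - 0"
    by (intro tendsto_diff uniform_mod_one_tendsto_le E_vanishing assms \<eta>)
  from order_tendstoD(1)[OF this \<eta>(2)]
  show "\<forall>\<^sub>F n in sequentially. a < prob {\<omega>\<in>space M. frac (Y n \<omega> + E n \<omega>) \<le> t}"
  proof eventually_elim
    case (elim n)
    have "prob {\<omega>\<in>space M. frac (Y n \<omega>) \<le> t - \<eta>} \<le>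
        prob {\<omega>\<in>space M. frac (Y n \<omega> + E n \<omega>) \<le> t} + prob {\<omega>\<in>space M. E n \<omega> > \<eta>}"
      by (rule prob_frac_le_diff_le) (simp_all add: E_nonneg)
    with elim show ?case
      by linarith
  qed
next
  fix t a :: real assume t: "t \<in> {0..1}" and "t < a"
  define \<eta> where "\<eta> = min ((a - t) / 2) (1 / 2)"
  have \<eta>: "\<eta> > 0" "unit_clamp t + (1 - unit_clamp (1 - \<eta>)) + 0 < a"
    using \<open>t < a\<close> t by (auto simp: \<eta>_def unit_clamp_def min_def max_def field_simps)
  have "(\<lambda>n. prob {\<omega>\<in>space M. frac (Y n \<omega>) \<le> t} + (1 - prob {\<omega>\<in>space M. frac (Y n \<omega>) < 1 - \<eta>})
      + prob {\<omega>\<in>space M. E n \<omega> > \<eta>}) \<longlonglongrightarrow> unit_clamp t + (1 - unit_clamp (1 - \<eta>)) + 0"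
    by (intro tendsto_add tendsto_diff tendsto_const uniform_mod_one_tendsto_le
        uniform_mod_one_tendsto_less E_vanishing assms \<eta>)
  from order_tendstoD(2)[OF this \<eta>(2)]
  show "\<forall>\<^sub>F n in sequentially. prob {\<omega>\<in>space M. frac (Y n \<omega> + E n \<omega>) \<le> t} < a"
  proof eventually_elim
    case (elim n)
    have "prob {\<omega>\<in>space M. frac (Y n \<omega> + E n \<omega>) \<le> t} \<le> prob {\<omega>\<in>space M. frac (Y n \<omega>) \<le> t}
        + (1 - prob {\<omega>\<in>space M. frac (Y n \<omega>) < 1 - \<eta>}) + prob {\<omega>\<in>space M. E n \<omega> > \<eta>}"
      by (rule prob_frac_add_le_le) (simp_all add: E_nonneg)
    with elim show ?case
      by linarith
  qed
qed

lemma significand_le_iff: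
  assumes "B > 1" "x > 0" "D > 0"
  shows "significand B x \<le> D \<longleftrightarrow> frac (log B x) \<le> log B D"
proof -
  have "significand B x = B powr (log B x) / B powr (real_of_int \<lfloor>log B x\<rfloor>)"
    using assms by (simp add: significand_def)
  also have "\<dots> = B powr frac (log B x)"
    by (simp add: frac_def powr_diff)
  finally show ?thesis
    using assms by (simp add: le_log_iff)
qed

lemma (in prob_space) strong_benford_iff_uniform_mod_one:
  assumes B: "B > 1" and pos: "\<And>n \<omega>. \<omega> \<in> space M \<Longrightarrow> X n \<omega> > 0"
  shows "strong_benford M B X \<longleftrightarrow> uniform_mod_one M (\<lambda>n \<omega>. log B (X n \<omega>))"
proof -
  have "log B ` {1..B} = {0..1}"
  proof
    show "{0..1} \<subseteq> log B ` {1..B}"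
    proof
      fix t :: real assume t: "t \<in> {0..1}"
      then have "B powr t \<in> {1..B}"
        using B powr_mono[of t 1 B] ge_one_powr_ge_zero[of B t] by auto
      then show "t \<in> log B ` {1..B}"
        using B by (intro image_eqI[of _ _ "B powr t"]) auto
    qed
  qed (use B in auto)
  moreover have "{\<omega>\<in>space M. significand B (X n \<omega>) \<le> D} = {\<omega>\<in>space M. frac (log B (X n \<omega>)) \<le> log B D}"
    if "D \<in> {1..B}" for n D
    using significand_le_iff[OF B pos] that by auto
  then have "strong_benford M B X \<longleftrightarrow>
      (\<forall>t\<in>log B ` {1..B}. (\<lambda>n. prob {\<omega>\<in>space M. frac (log B (X n \<omega>)) \<le> t}) \<longlonglongrightarrow> t)"
    unfolding strong_benford_def by simp
  ultimately show ?thesis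
    unfolding uniform_mod_one_def by simp
qed

section \<open>Sums dominated by their largest term\<close>

lemma sum_le_Max_mult_if_log_separated:
  fixes x :: "'i \<Rightarrow> real"
  assumes fin: "finite S" and ne: "S \<noteq> {}" and pos: "\<And>I. I \<in> S \<Longrightarrow> x I > 0" and B: "B > 1"
    and sep: "\<And>I J. I \<in> S \<Longrightarrow> J \<in> S \<Longrightarrow> I \<noteq> J \<Longrightarrow> \<bar>log B (x I) - log B (x J)\<bar> > K"
  shows "(\<Sum>I\<in>S. x I) \<le> Max (x ` S) * (1 + card S * B powr (- K))"
proof -
  have "Max (x ` S) \<in> x ` S"
    using fin ne by (intro Max_in) auto
  then obtain J where J: "J \<in> S" "x J = Max (x ` S)"
    by (elim imageE) simp
  have small: "x I \<le> x J * B powr (- K)" if I: "I \<in> S - {J}" for I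
  proof -
    have "x I \<le> x J"
      using I fin J(2) by auto
    then have "log B (x I) \<le> log B (x J)"
      using pos[of I] pos[of J] I J(1) B by simp
    moreover have "\<bar>log B (x I) - log B (x J)\<bar> > K"
      using sep[of I J] I J(1) by blast
    ultimately have "log B (x I) < log B (x J) + (- K)"
      by linarith
    then have "x I < B powr (log B (x J) + (- K))"
      using B pos[of I] I by (simp add: less_powr_iff)
    moreover have "B powr (log B (x J) + (- K)) = x J * B powr (- K)"
      using pos[of J] J(1) B by (simp add: powr_diff powr_minus_divide)
    ultimately show ?thesis
      by simp
  qed
  have "(\<Sum>I\<in>S. x I) = x J + (\<Sum>I\<in>S - {J}. x I)"
    using fin J by (simp add: sum.remove)
  also have "(\<Sum>I\<in>S - {J}. x I) \<le> (\<Sum>I\<in>S - {J}. x J * B powr (- K))"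
    by (intro sum_mono small)
  also have "\<dots> = card (S - {J}) * (x J * B powr (- K))"
    by simp
  also have "\<dots> \<le> card S * (x J * B powr (- K))"
    using pos[OF J(1)] by (intro mult_right_mono) (auto simp: card_Diff1_le fin)
  finally show ?thesis
    using J by (simp add: algebra_simps)
qed

lemma log_sum_le_log_Max_add_if_log_separated:
  fixes x :: "'i \<Rightarrow> real"
  assumes fin: "finite S" and ne: "S \<noteq> {}" and pos: "\<And>I. I \<in> S \<Longrightarrow> x I > 0" and B: "B > 1"
    and "\<eta> > 0"
    and sep: "\<And>I J. I \<in> S \<Longrightarrow> J \<in> S \<Longrightarrow> I \<noteq> J \<Longrightarrow>
      \<bar>log B (x I) - log B (x J)\<bar> > - log B ((B powr \<eta> - 1) / card S)"
  shows "log B (\<Sum>I\<in>S. x I) \<le> log B (Max (x ` S)) + \<eta>"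
proof -
  have "card S > 0"
    using fin ne by (simp add: card_gt_0_iff)
  then have "1 + card S * B powr (- (- log B ((B powr \<eta> - 1) / card S))) = B powr \<eta>"
    using B \<open>\<eta> > 0\<close> by simp
  then have "(\<Sum>I\<in>S. x I) \<le> Max (x ` S) * B powr \<eta>"
    using sum_le_Max_mult_if_log_separated[OF fin ne pos B sep] by simp
  moreover have "Max (x ` S) > 0"
    using fin ne pos by (subst Max_gr_iff) auto
  moreover have "(\<Sum>I\<in>S. x I) > 0"
    using ne pos by (intro sum_pos fin) auto
  ultimately have "log B (\<Sum>I\<in>S. x I) \<le> log B (Max (x ` S) * B powr \<eta>)"
    using B by simp
  also have "\<dots> = log B (Max (x ` S)) + \<eta>"
    using B \<open>Max (x ` S) > 0\<close> by (simp add: log_mult_pos)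
  finally show ?thesis .
qed

lemma (in prob_space) tendsto_prob_log_sum_gt_log_Max:
  fixes x :: "'i \<Rightarrow> nat \<Rightarrow> 'a \<Rightarrow> real"
  assumes B: "B > 1" and fin: "finite S" and ne: "S \<noteq> {}"
    and pos: "\<And>I n \<omega>. I \<in> S \<Longrightarrow> \<omega> \<in> space M \<Longrightarrow> x I n \<omega> > 0"
    and meas: "\<And>I n. I \<in> S \<Longrightarrow> x I n \<in> borel_measurable M"
    and sep: "\<And>I J K. I \<in> S \<Longrightarrow> J \<in> S \<Longrightarrow> I \<noteq> J \<Longrightarrow>
      (\<lambda>n. prob {\<omega>\<in>space M. \<bar>log B (x I n \<omega>) - log B (x J n \<omega>)\<bar> \<le> K}) \<longlonglongrightarrow> 0"
    and "\<eta> > 0"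
  shows "(\<lambda>n. prob {\<omega>\<in>space M. log B (\<Sum>I\<in>S. x I n \<omega>) > log B (Max ((\<lambda>I. x I n \<omega>) ` S)) + \<eta>})
      \<longlonglongrightarrow> 0"
proof -
  define K where "K = - log B ((B powr \<eta> - 1) / card S)"
  define PS where "PS = {(I, J). I \<in> S \<and> J \<in> S \<and> I \<noteq> J}"
  have finPS: "finite PS"
    by (rule finite_subset[of _ "S \<times> S"]) (use fin in \<open>auto simp: PS_def\<close>)
  define A where "A p n = {\<omega>\<in>space M. \<bar>log B (x (fst p) n \<omega>) - log B (x (snd p) n \<omega>)\<bar> \<le> K}" for p n
  have A_sets: "A p n \<in> sets M" if "p \<in> PS" for p n
  proof -
    have "(\<lambda>\<omega>. \<bar>log B (x (fst p) n \<omega>) - log B (x (snd p) n \<omega>)\<bar>) \<in> borel_measurable M"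
      using that meas by (auto simp: PS_def)
    then show ?thesis
      unfolding A_def by measurable
  qed
  have cover: "{\<omega>\<in>space M. log B (\<Sum>I\<in>S. x I n \<omega>) > log B (Max ((\<lambda>I. x I n \<omega>) ` S)) + \<eta>}
      \<subseteq> (\<Union>p\<in>PS. A p n)" for n
  proof safe
    fix \<omega> assume \<omega>: "\<omega> \<in> space M" and gt: "log B (\<Sum>I\<in>S. x I n \<omega>) > log B (Max ((\<lambda>I. x I n \<omega>) ` S)) + \<eta>"
    show "\<omega> \<in> (\<Union>p\<in>PS. A p n)"
    proof (rule ccontr)
      assume "\<omega> \<notin> (\<Union>p\<in>PS. A p n)"
      then have "\<bar>log B (x I n \<omega>) - log B (x J n \<omega>)\<bar> > K" if "I \<in> S" "J \<in> S" "I \<noteq> J" for I J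
        using that \<omega> by (auto simp: PS_def A_def not_le)
      then have "log B (\<Sum>I\<in>S. x I n \<omega>) \<le> log B (Max ((\<lambda>I. x I n \<omega>) ` S)) + \<eta>"
        using log_sum_le_log_Max_add_if_log_separated[where x="\<lambda>I. x I n \<omega>", OF fin ne pos[OF _ \<omega>] B \<open>\<eta> > 0\<close>]
        unfolding K_def by blast
      then show False
        using gt by simp
    qed
  qed
  have bound: "prob {\<omega>\<in>space M. log B (\<Sum>I\<in>S. x I n \<omega>) > log B (Max ((\<lambda>I. x I n \<omega>) ` S)) + \<eta>}
      \<le> (\<Sum>p\<in>PS. prob (A p n))" for n
  proof -
    have "prob {\<omega>\<in>space M. log B (\<Sum>I\<in>S. x I n \<omega>) > log B (Max ((\<lambda>I. x I n \<omega>) ` S)) + \<eta>}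
        \<le> prob (\<Union>p\<in>PS. A p n)"
      using A_sets finPS by (intro finite_measure_mono cover) auto
    also have "\<dots> \<le> (\<Sum>p\<in>PS. prob (A p n))"
      using A_sets finPS by (intro measure_UNION_le) auto
    finally show ?thesis .
  qed
  have lim: "(\<lambda>n. \<Sum>p\<in>PS. prob (A p n)) \<longlonglongrightarrow> 0"
  proof (rule tendsto_null_sum)
    fix p assume "p \<in> PS"
    then show "(\<lambda>n. prob (A p n)) \<longlonglongrightarrow> 0"
      unfolding A_def PS_def by (auto intro!: sep)
  qed
  show ?thesis
    by (rule tendsto_sandwich[OF _ _ tendsto_const lim]) (intro always_eventually allI bound measure_nonneg)+
qed

lemma (in prob_space) strong_benford_scaled_sum_if_Max:
  fixes x :: "'i \<Rightarrow> nat \<Rightarrow> 'a \<Rightarrow> real"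
  assumes B: "B > 1" and fin: "finite S" and ne: "S \<noteq> {}"
    and pos: "\<And>I n \<omega>. I \<in> S \<Longrightarrow> \<omega> \<in> space M \<Longrightarrow> x I n \<omega> > 0"
    and meas: "\<And>I n. I \<in> S \<Longrightarrow> x I n \<in> borel_measurable M"
    and sep: "\<And>I J K. I \<in> S \<Longrightarrow> J \<in> S \<Longrightarrow> I \<noteq> J \<Longrightarrow>
      (\<lambda>n. prob {\<omega>\<in>space M. \<bar>log B (x I n \<omega>) - log B (x J n \<omega>)\<bar> \<le> K}) \<longlonglongrightarrow> 0"
    and "C > 0"
    and benford_Max: "strong_benford M B (\<lambda>n \<omega>. Max ((\<lambda>I. x I n \<omega>) ` S))"
  shows "strong_benford M B (\<lambda>n \<omega>. C * (\<Sum>I\<in>S. x I n \<omega>))"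
proof -
  define Y where "Y n \<omega> = log B (Max ((\<lambda>I. x I n \<omega>) ` S))" for n \<omega>
  define E where "E n \<omega> = log B (\<Sum>I\<in>S. x I n \<omega>) - Y n \<omega>" for n \<omega>
  have Max_pos: "Max ((\<lambda>I. x I n \<omega>) ` S) > 0" if "\<omega> \<in> space M" for n \<omega>
    using fin ne pos[OF _ that] by (subst Max_gr_iff) auto
  have sum_pos: "(\<Sum>I\<in>S. x I n \<omega>) > 0" if "\<omega> \<in> space M" for n \<omega>
    using ne pos[OF _ that] by (intro sum_pos fin) auto
  have [measurable]: "Y n \<in> borel_measurable M" "E n \<in> borel_measurable M" for n
    using fin meas unfolding Y_def E_def by (auto intro!: borel_measurable_Max borel_measurable_sum)
  have E_nonneg: "E n \<omega> \<ge> 0" if "\<omega> \<in> space M" for n \<omega>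
  proof -
    have "Max ((\<lambda>I. x I n \<omega>) ` S) \<in> (\<lambda>I. x I n \<omega>) ` S"
      using fin ne by (intro Max_in) auto
    then obtain J where "J \<in> S" "x J n \<omega> = Max ((\<lambda>I. x I n \<omega>) ` S)"
      by (elim imageE) simp
    moreover have "x J n \<omega> \<le> (\<Sum>I\<in>S. x I n \<omega>)" if "J \<in> S"
      using that fin pos[OF _ \<open>\<omega> \<in> space M\<close>] by (intro member_le_sum) (auto intro: less_imp_le)
    ultimately show ?thesis
      unfolding E_def Y_def using Max_pos[OF that] sum_pos[OF that] B by simp
  qed
  have "uniform_mod_one M Y"
    using benford_Max strong_benford_iff_uniform_mod_one[OF B, of "\<lambda>n \<omega>. Max ((\<lambda>I. x I n \<omega>) ` S)"] Max_pos
    unfolding Y_def by blast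
  then have "uniform_mod_one M (\<lambda>n \<omega>. (Y n \<omega> + log B C) + E n \<omega>)"
  proof (rule uniform_mod_one_add_vanishing[OF uniform_mod_one_add_const])
    fix \<eta> :: real assume "\<eta> > 0"
    then show "(\<lambda>n. prob {\<omega>\<in>space M. E n \<omega> > \<eta>}) \<longlonglongrightarrow> 0"
      using tendsto_prob_log_sum_gt_log_Max[OF B fin ne pos meas sep]
      unfolding E_def Y_def by (simp add: algebra_simps)
  qed (simp_all add: E_nonneg)
  then have "uniform_mod_one M (\<lambda>n \<omega>. log B (C * (\<Sum>I\<in>S. x I n \<omega>)))"
    by (rule uniform_mod_one_cong) (use B \<open>C > 0\<close> sum_pos in \<open>simp add: E_def log_mult_pos\<close>)
  moreover have "C * (\<Sum>I\<in>S. x I n \<omega>) > 0" if "\<omega> \<in> space M" for n \<omega>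
    using \<open>C > 0\<close> sum_pos[OF that] by simp
  ultimately show ?thesis
    using strong_benford_iff_uniform_mod_one[OF B, of "\<lambda>n \<omega>. C * (\<Sum>I\<in>S. x I n \<omega>)"] by blast
qed

section \<open>Independent families\<close>

lemma (in prob_space) indep_vars_reindex:
  assumes "indep_vars M' X I" "inj_on h J" "h ` J \<subseteq> I"
  shows "indep_vars (\<lambda>j. M' (h j)) (\<lambda>j. X (h j)) J"
proof -
  have "indep_vars (\<lambda>j. PiM {h j} M') (\<lambda>j \<omega>. restrict (\<lambda>i. X i \<omega>) {h j}) J"
    using assms by (intro indep_vars_restrict) (auto simp: disjoint_family_on_def inj_on_def)
  then have "indep_vars (\<lambda>j. M' (h j)) (\<lambda>j \<omega>. (\<lambda>x. x (h j)) (restrict (\<lambda>i. X i \<omega>) {h j})) J"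
    by (rule indep_vars_compose2) (intro measurable_component_singleton, simp)
  then show ?thesis
    by simp
qed

lemma (in prob_space) indep_vars_imp_indep_var:
  assumes "indep_vars M' X I" "i \<in> I" "j \<in> I" "i \<noteq> j"
  shows "indep_var (M' i) (X i) (M' j) (X j)"
proof -
  have "indep_var (PiM {i} M') (\<lambda>\<omega>. restrict (\<lambda>k. X k \<omega>) {i}) (PiM {j} M') (\<lambda>\<omega>. restrict (\<lambda>k. X k \<omega>) {j})"
    using assms by (intro indep_var_restrict) auto
  then have "indep_var (M' i) ((\<lambda>x. x i) \<circ> (\<lambda>\<omega>. restrict (\<lambda>k. X k \<omega>) {i}))
      (M' j) ((\<lambda>x. x j) \<circ> (\<lambda>\<omega>. restrict (\<lambda>k. X k \<omega>) {j}))"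
    by (rule indep_var_compose) (intro measurable_component_singleton, simp)+
  then show ?thesis
    by (simp add: comp_def)
qed

lemma (in prob_space) indep_vars_row_sums:
  fixes P :: "'i \<Rightarrow> nat \<Rightarrow> 'a \<Rightarrow> real" and g :: "'i \<Rightarrow> real \<Rightarrow> real"
  assumes indep: "indep_vars (\<lambda>_. borel) (\<lambda>(i, n). P i n) (I \<times> {1..})" and "K \<subseteq> I"
    and g: "\<And>i. i \<in> K \<Longrightarrow> g i \<in> borel_measurable borel"
  shows "indep_vars (\<lambda>_. borel) (\<lambda>t \<omega>. \<Sum>i\<in>K. g i (P i (Suc t) \<omega>)) UNIV"
proof -
  define Q where "Q = (\<lambda>(i, n). P i n)"
  define row where "row t = (\<lambda>i. (i, Suc t)) ` K" for t
  have "indep_vars (\<lambda>t. PiM (row t) (\<lambda>_. borel)) (\<lambda>t \<omega>. restrict (\<lambda>p. Q p \<omega>) (row t)) UNIV"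
    using indep \<open>K \<subseteq> I\<close> unfolding Q_def
    by (intro indep_vars_restrict) (auto simp: row_def disjoint_family_on_def)
  then have "indep_vars (\<lambda>_. borel)
      (\<lambda>t \<omega>. (\<lambda>x. \<Sum>i\<in>K. g i (x (i, Suc t))) (restrict (\<lambda>p. Q p \<omega>) (row t))) UNIV"
  proof (rule indep_vars_compose2)
    fix t :: nat
    have summand: "(\<lambda>x. g i (x (i, Suc t))) \<in> borel_measurable (PiM (row t) (\<lambda>_. borel))" if "i \<in> K" for i
      using that by (intro measurable_compose[OF _ g[OF that]] measurable_component_singleton)
        (auto simp: row_def)
    show "(\<lambda>x. \<Sum>i\<in>K. g i (x (i, Suc t))) \<in> borel_measurable (PiM (row t) (\<lambda>_. borel))"
      by (intro borel_measurable_sum summand)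
  qed
  moreover have "restrict (\<lambda>p. Q p \<omega>) (row t) (i, Suc t) = P i (Suc t) \<omega>" if "i \<in> K" for t \<omega> i
    using that by (simp add: row_def Q_def)
  ultimately show ?thesis
    by (simp cong: sum.cong)
qed

lemma (in prob_space) distr_sum_eq_if_indep_marginals_eq:
  fixes Y Z :: "'i \<Rightarrow> 'a \<Rightarrow> real" and g :: "'i \<Rightarrow> real \<Rightarrow> real"
  assumes indep: "indep_vars (\<lambda>_. borel) Y K" "indep_vars (\<lambda>_. borel) Z K"
    and marginals: "\<And>i. i \<in> K \<Longrightarrow> distr M borel (Y i) = distr M borel (Z i)"
    and g: "\<And>i. i \<in> K \<Longrightarrow> g i \<in> borel_measurable borel"
  shows "distr M borel (\<lambda>\<omega>. \<Sum>i\<in>K. g i (Y i \<omega>)) = distr M borel (\<lambda>\<omega>. \<Sum>i\<in>K. g i (Z i \<omega>))"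
proof (cases "K = {}")
  case False
  define G where "G x = (\<Sum>i\<in>K. g i (x i))" for x :: "'i \<Rightarrow> real"
  have summand: "(\<lambda>x. g i (x i)) \<in> borel_measurable (PiM K (\<lambda>_. borel))" if "i \<in> K" for i
    using that by (intro measurable_compose[OF _ g[OF that]] measurable_component_singleton)
  have G: "G \<in> borel_measurable (PiM K (\<lambda>_. borel))"
    unfolding G_def by (intro borel_measurable_sum summand)
  \<comment> \<open>independence identifies the joint laws with the product of the (equal) marginals\<close>
  have "distr M borel (\<lambda>\<omega>. \<Sum>i\<in>K. g i (X i \<omega>)) = distr (PiM K (\<lambda>i. distr M borel (X i))) borel G"
    if "indep_vars (\<lambda>_. borel) X K" for X
  proof -
    have rv: "X i \<in> borel_measurable M" if "i \<in> K" for i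
      using \<open>indep_vars (\<lambda>_. borel) X K\<close> that unfolding indep_vars_def2 by simp
    have "distr M (PiM K (\<lambda>_. borel)) (\<lambda>\<omega>. \<lambda>i\<in>K. X i \<omega>) = PiM K (\<lambda>i. distr M borel (X i))"
      using indep_vars_iff_distr_eq_PiM'[where M'="\<lambda>_. borel" and X=X, OF False rv] that by blast
    moreover have "distr M borel (G \<circ> (\<lambda>\<omega>. \<lambda>i\<in>K. X i \<omega>)) =
        distr (distr M (PiM K (\<lambda>_. borel)) (\<lambda>\<omega>. \<lambda>i\<in>K. X i \<omega>)) borel G"
      using rv by (intro distr_distr[symmetric] G measurable_restrict) auto
    moreover have "distr M borel (G \<circ> (\<lambda>\<omega>. \<lambda>i\<in>K. X i \<omega>)) = distr M borel (\<lambda>\<omega>. \<Sum>i\<in>K. g i (X i \<omega>))"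
      by (intro distr_cong) (auto simp: G_def)
    ultimately show ?thesis
      by simp
  qed
  moreover have "PiM K (\<lambda>i. distr M borel (Y i)) = PiM K (\<lambda>i. distr M borel (Z i))"
    using marginals by (rule PiM_cong[OF refl])
  ultimately show ?thesis
    using indep by simp
qed simp

lemma (in prob_space)
  fixes L :: "'i \<Rightarrow> 'a \<Rightarrow> real"
  assumes indep: "indep_vars (\<lambda>_. borel) L K" and ij: "i \<in> K" "j \<in> K"
    and sq: "\<And>i. i \<in> K \<Longrightarrow> integrable M (\<lambda>\<omega>. (L i \<omega>)\<^sup>2)"
    and mean: "\<And>i. i \<in> K \<Longrightarrow> expectation (L i) = \<mu>"
    and var: "\<And>i. i \<in> K \<Longrightarrow> variance (L i) = \<sigma>\<^sup>2"
  shows integrable_centered_product_indep: "integrable M (\<lambda>\<omega>. (L i \<omega> - \<mu>) * (L j \<omega> - \<mu>))"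
    and expectation_centered_product_indep:
      "expectation (\<lambda>\<omega>. (L i \<omega> - \<mu>) * (L j \<omega> - \<mu>)) = (if i = j then \<sigma>\<^sup>2 else 0)"
proof -
  have rv: "L k \<in> borel_measurable M" if "k \<in> K" for k
    using indep that unfolding indep_vars_def2 by simp
  have int: "integrable M (L k)" if "k \<in> K" for k
    using rv[OF that] sq[OF that] by (rule square_integrable_imp_integrable)
  have centered_int: "integrable M (\<lambda>\<omega>. L k \<omega> - \<mu>)" if "k \<in> K" for k
    using int[OF that] by simp
  have centered_mean: "expectation (\<lambda>\<omega>. L k \<omega> - \<mu>) = 0" if "k \<in> K" for k
    using int[OF that] mean[OF that] by (simp add: prob_space)
  have "integrable M (\<lambda>\<omega>. (L i \<omega> - \<mu>) * (L j \<omega> - \<mu>)) \<and>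
      expectation (\<lambda>\<omega>. (L i \<omega> - \<mu>) * (L j \<omega> - \<mu>)) = (if i = j then \<sigma>\<^sup>2 else 0)"
  proof (cases "i = j")
    case True
    have "(\<lambda>\<omega>. (L i \<omega> - \<mu>) * (L i \<omega> - \<mu>)) = (\<lambda>\<omega>. (L i \<omega>)\<^sup>2 + (- 2 * \<mu>) * L i \<omega> + \<mu>\<^sup>2)"
      by (simp add: fun_eq_iff power2_eq_square algebra_simps)
    moreover have "integrable M (\<lambda>\<omega>. (L i \<omega>)\<^sup>2 + (- 2 * \<mu>) * L i \<omega> + \<mu>\<^sup>2)"
      using sq[OF ij(1)] int[OF ij(1)] by simp
    moreover have "expectation (\<lambda>\<omega>. (L i \<omega> - \<mu>) * (L i \<omega> - \<mu>)) = \<sigma>\<^sup>2"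
      using var[OF ij(1)] mean[OF ij(1)] by (simp add: power2_eq_square)
    ultimately show ?thesis
      using True by metis
  next
    case False
    have "indep_vars (\<lambda>_. borel) (\<lambda>k \<omega>. L k \<omega> - \<mu>) K"
      using indep by (rule indep_vars_compose2) simp
    from indep_vars_imp_indep_var[OF this ij False]
    have indep_ij: "indep_var borel (\<lambda>\<omega>. L i \<omega> - \<mu>) borel (\<lambda>\<omega>. L j \<omega> - \<mu>)" .
    show ?thesis
      using indep_var_lebesgue_integral[OF indep_ij centered_int[OF ij(1)] centered_int[OF ij(2)]]
        indep_var_integrable[OF indep_ij centered_int[OF ij(1)] centered_int[OF ij(2)]]
        centered_mean[OF ij(1)] False
      by simp
  qed
  then show "integrable M (\<lambda>\<omega>. (L i \<omega> - \<mu>) * (L j \<omega> - \<mu>))"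
    and "expectation (\<lambda>\<omega>. (L i \<omega> - \<mu>) * (L j \<omega> - \<mu>)) = (if i = j then \<sigma>\<^sup>2 else 0)"
    by auto
qed

lemma sum_sum_mult_diagonal:
  fixes s :: "'i \<Rightarrow> 'a::comm_ring_1"
  assumes "finite K"
  shows "(\<Sum>i\<in>K. \<Sum>j\<in>K. s i * s j * (if i = j then c else 0)) = (\<Sum>i\<in>K. (s i)\<^sup>2) * c"
proof -
  have "(\<Sum>j\<in>K. s i * s j * (if i = j then c else 0)) = (s i)\<^sup>2 * c" if "i \<in> K" for i
  proof -
    have "(\<Sum>j\<in>K. s i * s j * (if i = j then c else 0)) = (\<Sum>j\<in>K. if i = j then (s i)\<^sup>2 * c else 0)"
      by (intro sum.cong refl) (simp add: power2_eq_square)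
    also have "\<dots> = (s i)\<^sup>2 * c"
      using that assms by simp
    finally show ?thesis .
  qed
  then show ?thesis
    by (simp add: sum_distrib_right)
qed

lemma (in prob_space) signed_sum_indep_moments:
  fixes L :: "'i \<Rightarrow> 'a \<Rightarrow> real" and s :: "'i \<Rightarrow> real"
  assumes indep: "indep_vars (\<lambda>_. borel) L K" and "finite K"
    and sq: "\<And>i. i \<in> K \<Longrightarrow> integrable M (\<lambda>\<omega>. (L i \<omega>)\<^sup>2)"
    and mean: "\<And>i. i \<in> K \<Longrightarrow> expectation (L i) = \<mu>"
    and var: "\<And>i. i \<in> K \<Longrightarrow> variance (L i) = \<sigma>\<^sup>2"
    and balanced: "(\<Sum>i\<in>K. s i) = 0"
  shows "integrable M (\<lambda>\<omega>. (\<Sum>i\<in>K. s i * L i \<omega>)\<^sup>2)"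
    and "expectation (\<lambda>\<omega>. \<Sum>i\<in>K. s i * L i \<omega>) = 0"
    and "variance (\<lambda>\<omega>. \<Sum>i\<in>K. s i * L i \<omega>) = (\<Sum>i\<in>K. (s i)\<^sup>2) * \<sigma>\<^sup>2"
proof -
  note product_int = integrable_centered_product_indep[OF indep _ _ sq mean var]
  note product_exp = expectation_centered_product_indep[OF indep _ _ sq mean var]
  have int: "integrable M (L i)" if "i \<in> K" for i
    using indep that unfolding indep_vars_def2
    by (intro square_integrable_imp_integrable[OF _ sq[OF that]]) simp
  have centered: "(\<Sum>i\<in>K. s i * L i \<omega>) = (\<Sum>i\<in>K. s i * (L i \<omega> - \<mu>))" for \<omega>
  proof -
    have "(\<Sum>i\<in>K. s i * (L i \<omega> - \<mu>)) = (\<Sum>i\<in>K. s i * L i \<omega>) - (\<Sum>i\<in>K. s i) * \<mu>"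
      by (simp add: right_diff_distrib sum_subtractf sum_distrib_right)
    then show ?thesis
      using balanced by simp
  qed
  have square: "(\<Sum>i\<in>K. s i * L i \<omega>)\<^sup>2 =
      (\<Sum>i\<in>K. \<Sum>j\<in>K. s i * s j * ((L i \<omega> - \<mu>) * (L j \<omega> - \<mu>)))" for \<omega>
    unfolding centered power2_eq_square sum_product by (intro sum.cong refl) (simp add: mult_ac)
  have summand: "integrable M (\<lambda>\<omega>. s i * s j * ((L i \<omega> - \<mu>) * (L j \<omega> - \<mu>)))"
    if "i \<in> K" "j \<in> K" for i j
    using product_int[OF that] by simp
  show "integrable M (\<lambda>\<omega>. (\<Sum>i\<in>K. s i * L i \<omega>)\<^sup>2)"
    unfolding square by (intro Bochner_Integration.integrable_sum summand)
  have "expectation (\<lambda>\<omega>. \<Sum>i\<in>K. s i * (L i \<omega> - \<mu>)) = (\<Sum>i\<in>K. expectation (\<lambda>\<omega>. s i * (L i \<omega> - \<mu>)))"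
    using int by (intro Bochner_Integration.integral_sum) auto
  also have "\<dots> = 0"
    using int mean by (simp add: prob_space)
  finally show mean_zero: "expectation (\<lambda>\<omega>. \<Sum>i\<in>K. s i * L i \<omega>) = 0"
    by (simp only: centered)
  have "variance (\<lambda>\<omega>. \<Sum>i\<in>K. s i * L i \<omega>) =
      expectation (\<lambda>\<omega>. \<Sum>i\<in>K. \<Sum>j\<in>K. s i * s j * ((L i \<omega> - \<mu>) * (L j \<omega> - \<mu>)))"
    by (simp only: mean_zero square diff_zero)
  also have "\<dots> = (\<Sum>i\<in>K. expectation (\<lambda>\<omega>. \<Sum>j\<in>K. s i * s j * ((L i \<omega> - \<mu>) * (L j \<omega> - \<mu>))))"
    by (intro Bochner_Integration.integral_sum Bochner_Integration.integrable_sum summand)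
  also have "\<dots> = (\<Sum>i\<in>K. \<Sum>j\<in>K. expectation (\<lambda>\<omega>. s i * s j * ((L i \<omega> - \<mu>) * (L j \<omega> - \<mu>))))"
    by (intro sum.cong refl Bochner_Integration.integral_sum summand)
  also have "\<dots> = (\<Sum>i\<in>K. \<Sum>j\<in>K. s i * s j * expectation (\<lambda>\<omega>. (L i \<omega> - \<mu>) * (L j \<omega> - \<mu>)))"
    by simp
  also have "\<dots> = (\<Sum>i\<in>K. \<Sum>j\<in>K. s i * s j * (if i = j then \<sigma>\<^sup>2 else 0))"
    by (intro sum.cong refl) (simp add: product_exp)
  also have "\<dots> = (\<Sum>i\<in>K. (s i)\<^sup>2) * \<sigma>\<^sup>2"
    using \<open>finite K\<close> by (rule sum_sum_mult_diagonal)
  finally show "variance (\<lambda>\<omega>. \<Sum>i\<in>K. s i * L i \<omega>) = (\<Sum>i\<in>K. (s i)\<^sup>2) * \<sigma>\<^sup>2" .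
qed

lemma (in prob_space) tendsto_prob_abs_shifted_log_walk_le_zero:
  fixes P :: "'i \<Rightarrow> nat \<Rightarrow> 'a \<Rightarrow> real" and s :: "'i \<Rightarrow> real"
  assumes indep: "indep_vars (\<lambda>_. borel) (\<lambda>(i, n). P i n) (I \<times> {1..})"
    and marginal: "\<And>i n. i \<in> I \<Longrightarrow> n \<ge> 1 \<Longrightarrow> distr M borel (P i n) = distr M borel (P i 1)"
    and U: "U \<subseteq> I" "finite U" "U \<noteq> {}"
    and sq: "\<And>i. i \<in> U \<Longrightarrow> integrable M (\<lambda>\<omega>. (log B (P i 1 \<omega>))\<^sup>2)"
    and mean: "\<And>i. i \<in> U \<Longrightarrow> expectation (\<lambda>\<omega>. log B (P i 1 \<omega>)) = \<mu>"
    and var: "\<And>i. i \<in> U \<Longrightarrow> variance (\<lambda>\<omega>. log B (P i 1 \<omega>)) = \<sigma>\<^sup>2" and "\<sigma> > 0"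
    and balanced: "(\<Sum>i\<in>U. s i) = 0" and nonzero: "\<And>i. i \<in> U \<Longrightarrow> s i \<noteq> 0"
  shows "(\<lambda>n. prob {\<omega>\<in>space M. \<bar>c + (\<Sum>t<n. \<Sum>i\<in>U. s i * log B (P i (Suc t) \<omega>))\<bar> \<le> K})
      \<longlonglongrightarrow> 0"
proof -
  define g where "g i x = s i * log B x" for i x
  define X where "X t \<omega> = (\<Sum>i\<in>U. g i (P i (Suc t) \<omega>))" for t \<omega>
  have [measurable]: "g i \<in> borel_measurable borel" for i
    unfolding g_def by measurable
  have column: "indep_vars (\<lambda>_. borel) (\<lambda>i. P i (Suc t)) U" for t
    using indep_vars_reindex[OF indep, of "\<lambda>i. (i, Suc t)" U] U by (auto simp: inj_on_def)
  have "indep_vars (\<lambda>_. borel) (\<lambda>i \<omega>. log B (P i (Suc 0) \<omega>)) U"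
    by (rule indep_vars_compose2[OF column]) measurable
  then have "indep_vars (\<lambda>_. borel) (\<lambda>i \<omega>. log B (P i 1 \<omega>)) U"
    by simp
  note moments = signed_sum_indep_moments[OF this U(2) sq mean var balanced]
  have X0: "X 0 = (\<lambda>\<omega>. \<Sum>i\<in>U. s i * log B (P i 1 \<omega>))"
    by (simp add: X_def g_def fun_eq_iff)
  have "(\<Sum>i\<in>U. (s i)\<^sup>2) * \<sigma>\<^sup>2 > 0"
    using U nonzero \<open>\<sigma> > 0\<close> by (intro mult_pos_pos sum_pos) auto
  then have X_var: "variance (X 0) > 0"
    using moments(3) by (simp only: X0)
  have X_sq: "integrable M (\<lambda>\<omega>. (X 0 \<omega>)\<^sup>2)" and X_mean: "expectation (X 0) = 0"
    using moments(1,2) by (simp_all only: X0)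
  have indep_X: "indep_vars (\<lambda>_. borel) X UNIV"
    unfolding X_def using indep U by (intro indep_vars_row_sums) auto
  have distr_X: "distr M borel (X t) = distr M borel (X 0)" for t
    unfolding X_def
  proof (rule distr_sum_eq_if_indep_marginals_eq[OF column column])
    fix i assume "i \<in> U"
    then show "distr M borel (P i (Suc t)) = distr M borel (P i (Suc 0))"
      using marginal[of i "Suc t"] U by auto
  qed measurable
  show ?thesis
    using tendsto_prob_abs_shifted_sum_le_zero[OF indep_X distr_X X_sq X_mean X_var]
    by (simp add: X_def g_def)
qed

section \<open>Linear fragmentation\<close>

lemma log_prod:
  assumes "finite A" "\<And>i. i \<in> A \<Longrightarrow> f i > 0"
  shows "log b (\<Prod>i\<in>A. f i) = (\<Sum>i\<in>A. log b (f i))"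
proof -
  have "f i \<noteq> 0" if "i \<in> A" for i
    using assms(2)[OF that] by simp
  then have "ln (\<Prod>i\<in>A. f i) = (\<Sum>i\<in>A. ln (f i))"
    by (rule ln_prod[OF assms(1)])
  then show ?thesis
    by (simp add: log_def sum_divide_distrib)
qed

lemma sum_diff_eq_signed_sum_symdiff:
  fixes g :: "'i \<Rightarrow> 'b::ring_1"
  assumes "finite I" "finite J"
  shows "(\<Sum>i\<in>I. g i) - (\<Sum>i\<in>J. g i) = (\<Sum>i\<in>sym_diff I J. (if i \<in> I then 1 else -1) * g i)"
proof -
  have "(\<Sum>i\<in>sym_diff I J. (if i \<in> I then 1 else -1) * g i) =
      (\<Sum>i\<in>I - J. (if i \<in> I then 1 else -1) * g i) + (\<Sum>i\<in>J - I. (if i \<in> I then 1 else -1) * g i)"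
    using assms by (intro sum.union_disjoint) auto
  also have "\<dots> = (\<Sum>i\<in>I - J. g i) - (\<Sum>i\<in>J - I. g i)"
    by (simp add: sum_negf)
  also have "\<dots> = (\<Sum>i\<in>I. g i) - (\<Sum>i\<in>J. g i)"
    using assms by (simp add: sum.Int_Diff[of I g J] sum.Int_Diff[of J g I] Int_commute)
  finally show ?thesis ..
qed

lemma log_side:
  assumes "a i < b i" "\<And>t. t \<in> {1..n} \<Longrightarrow> P i t \<omega> > 0"
  shows "log B (side a b P n \<omega> i) = log B (b i - a i) + (\<Sum>t<n. log B (P i (Suc t) \<omega>))"
proof -
  have "log B (side a b P n \<omega> i) = log B (b i - a i) + log B (\<Prod>t\<in>{1..n}. P i t \<omega>)"
    unfolding side_def using assms by (intro log_mult_pos prod_pos) auto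
  also have "log B (\<Prod>t\<in>{1..n}. P i t \<omega>) = (\<Sum>t\<in>{1..n}. log B (P i t \<omega>))"
    using assms(2) by (intro log_prod) auto
  also have "\<dots> = (\<Sum>t<n. log B (P i (Suc t) \<omega>))"
    by (rule sum_bounds_lt_plus1[symmetric])
  finally show ?thesis .
qed

lemma log_prod_side_diff:
  fixes I J :: "nat set"
  assumes "finite I" "finite J" and box: "\<And>i. i \<in> I \<union> J \<Longrightarrow> a i < b i"
    and pos: "\<And>i t. i \<in> I \<union> J \<Longrightarrow> t \<in> {1..n} \<Longrightarrow> P i t \<omega> > 0"
  shows "log B (\<Prod>i\<in>I. side a b P n \<omega> i) - log B (\<Prod>i\<in>J. side a b P n \<omega> i) =
    (\<Sum>i\<in>sym_diff I J. (if i \<in> I then 1 else -1) * log B (b i - a i)) +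
    (\<Sum>t<n. \<Sum>i\<in>sym_diff I J. (if i \<in> I then 1 else -1) * log B (P i (Suc t) \<omega>))"
proof -
  have side_pos: "side a b P n \<omega> i > 0" if "i \<in> I \<union> J" for i
    unfolding side_def using box[OF that] pos[OF that] by (intro mult_pos_pos prod_pos) auto
  have "log B (\<Prod>i\<in>I. side a b P n \<omega> i) - log B (\<Prod>i\<in>J. side a b P n \<omega> i) =
      (\<Sum>i\<in>I. log B (side a b P n \<omega> i)) - (\<Sum>i\<in>J. log B (side a b P n \<omega> i))"
    using assms side_pos by (simp add: log_prod)
  also have "\<dots> = (\<Sum>i\<in>sym_diff I J. (if i \<in> I then 1 else -1) * log B (side a b P n \<omega> i))"
    using assms(1,2) by (rule sum_diff_eq_signed_sum_symdiff)
  also have "\<dots> = (\<Sum>i\<in>sym_diff I J. (if i \<in> I then 1 else -1) *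
      (log B (b i - a i) + (\<Sum>t<n. log B (P i (Suc t) \<omega>))))"
    using box pos by (intro sum.cong refl arg_cong2[where f="(*)"] log_side) auto
  also have "\<dots> = (\<Sum>i\<in>sym_diff I J. (if i \<in> I then 1 else -1) * log B (b i - a i)) +
      (\<Sum>i\<in>sym_diff I J. \<Sum>t<n. (if i \<in> I then 1 else -1) * log B (P i (Suc t) \<omega>))"
    by (simp add: distrib_left sum.distrib sum_distrib_left)
  finally show ?thesis
    by (simp add: sum.swap[of _ "sym_diff I J"])
qed

lemma tendsto_prob_log_ratio_side_prods_bounded:
  fixes M :: "'a measure" and P :: "nat \<Rightarrow> nat \<Rightarrow> 'a \<Rightarrow> real" and f :: "nat \<Rightarrow> real \<Rightarrow> real"
  assumes "prob_space M"
    and box: "\<And>i. i \<in> {1..m} \<Longrightarrow> a i < b i"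
    and range: "\<And>i n \<omega>. i \<in> {1..m} \<Longrightarrow> n \<ge> 1 \<Longrightarrow> \<omega> \<in> space M \<Longrightarrow> P i n \<omega> \<in> {0<..<1}"
    and distr: "\<And>i n. i \<in> {1..m} \<Longrightarrow> n \<ge> 1 \<Longrightarrow>
        distributed M lborel (P i n) (\<lambda>x. ennreal (indicator {0<..<1} x * f i x))"
    and indep: "prob_space.indep_vars M (\<lambda>_. borel) (\<lambda>(i, n). P i n) ({1..m} \<times> {1..})"
    and int2: "\<And>i. i \<in> {1..m} \<Longrightarrow> integrable M (\<lambda>\<omega>. (log B (P i 1 \<omega>))\<^sup>2)"
    and mean: "\<And>i. i \<in> {1..m} \<Longrightarrow> prob_space.expectation M (\<lambda>\<omega>. log B (P i 1 \<omega>)) = \<mu>"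
    and var: "\<And>i. i \<in> {1..m} \<Longrightarrow> prob_space.variance M (\<lambda>\<omega>. log B (P i 1 \<omega>)) = \<sigma>\<^sup>2"
    and "\<sigma> > 0"
    and IJ: "I \<subseteq> {1..m}" "J \<subseteq> {1..m}" "I \<noteq> J" "card I = card J"
  shows "(\<lambda>n. measure M {\<omega>\<in>space M.
      \<bar>log B (\<Prod>i\<in>I. side a b P n \<omega> i) - log B (\<Prod>i\<in>J. side a b P n \<omega> i)\<bar> \<le> K}) \<longlonglongrightarrow> 0"
proof -
  interpret prob_space M
    by fact
  define s where "s i = (if i \<in> I then 1 else -1 :: real)" for i
  define c where "c = (\<Sum>i\<in>sym_diff I J. s i * log B (b i - a i))"
  have fin: "finite I" "finite J"
    using IJ by (auto intro: finite_subset)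
  have marginal: "distr M borel (P i n) = distr M borel (P i 1)" if "i \<in> {1..m}" "n \<ge> 1" for i n
  proof -
    have "distr M lborel (P i n) = distr M lborel (P i 1)"
      using distributed_distr_eq_density[OF distr[OF that]] distributed_distr_eq_density[OF distr[OF that(1)]]
      by simp
    then show ?thesis
      by (simp add: distr_cong[OF refl sets_lborel[symmetric]])
  qed
  have "(\<Sum>i\<in>sym_diff I J. s i * 1) = (\<Sum>i\<in>I. 1) - (\<Sum>i\<in>J. 1)"
    unfolding s_def by (rule sum_diff_eq_signed_sum_symdiff[OF fin, symmetric])
  then have balanced: "(\<Sum>i\<in>sym_diff I J. s i) = 0"
    by (simp add: IJ(4))
  have U: "sym_diff I J \<subseteq> {1..m}" "finite (sym_diff I J)" "sym_diff I J \<noteq> {}"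
    using IJ fin by auto
  have "integrable M (\<lambda>\<omega>. (log B (P i 1 \<omega>))\<^sup>2)"
    and "expectation (\<lambda>\<omega>. log B (P i 1 \<omega>)) = \<mu>"
    and "variance (\<lambda>\<omega>. log B (P i 1 \<omega>)) = \<sigma>\<^sup>2" if "i \<in> sym_diff I J" for i
    using int2 mean var that U(1) by blast+
  moreover have "s i \<noteq> 0" for i
    by (simp add: s_def)
  ultimately have limit: "(\<lambda>n. prob {\<omega>\<in>space M.
      \<bar>c + (\<Sum>t<n. \<Sum>i\<in>sym_diff I J. s i * log B (P i (Suc t) \<omega>))\<bar> \<le> K}) \<longlonglongrightarrow> 0"
    by (intro tendsto_prob_abs_shifted_log_walk_le_zero[OF indep marginal U _ _ _ \<open>\<sigma> > 0\<close> balanced])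
  have "log B (\<Prod>i\<in>I. side a b P n \<omega> i) - log B (\<Prod>i\<in>J. side a b P n \<omega> i) =
      c + (\<Sum>t<n. \<Sum>i\<in>sym_diff I J. s i * log B (P i (Suc t) \<omega>))" if "\<omega> \<in> space M" for n \<omega>
    unfolding c_def s_def using fin IJ box range[OF _ _ that]
    by (intro log_prod_side_diff) auto
  then have "{\<omega>\<in>space M. \<bar>log B (\<Prod>i\<in>I. side a b P n \<omega> i) - log B (\<Prod>i\<in>J. side a b P n \<omega> i)\<bar> \<le> K} =
      {\<omega>\<in>space M. \<bar>c + (\<Sum>t<n. \<Sum>i\<in>sym_diff I J. s i * log B (P i (Suc t) \<omega>))\<bar> \<le> K}" for n
    by auto
  then show ?thesis
    using limit by simp
qed

theorem theorem1p6:
  fixes M :: "'a measure" and B :: real and m d :: nat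
    and a b :: "nat \<Rightarrow> real"
    and P :: "nat \<Rightarrow> nat \<Rightarrow> 'a \<Rightarrow> real"
    and f :: "nat \<Rightarrow> real \<Rightarrow> real"
    and \<mu> \<sigma> :: real
  assumes "prob_space M"
    and "B > 1" and "1 \<le> d" and "d \<le> m"
    and box: "\<And>i. i \<in> {1..m} \<Longrightarrow> a i < b i"
    and dens_pos: "\<And>i x. i \<in> {1..m} \<Longrightarrow> x \<in> {0<..<1} \<Longrightarrow> f i x > 0"
    and range: "\<And>i n \<omega>. i \<in> {1..m} \<Longrightarrow> n \<ge> 1 \<Longrightarrow> \<omega> \<in> space M \<Longrightarrow> P i n \<omega> \<in> {0<..<1}"
    and distr: "\<And>i n. i \<in> {1..m} \<Longrightarrow> n \<ge> 1 \<Longrightarrow>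
        distributed M lborel (P i n) (\<lambda>x. ennreal (indicator {0<..<1} x * f i x))"
    and indep: "prob_space.indep_vars M (\<lambda>_. borel) (\<lambda>(i, n). P i n) ({1..m} \<times> {1..})"
    and int1: "\<And>i. i \<in> {1..m} \<Longrightarrow> integrable M (\<lambda>\<omega>. log B (P i 1 \<omega>))"
    and int2: "\<And>i. i \<in> {1..m} \<Longrightarrow> integrable M (\<lambda>\<omega>. (log B (P i 1 \<omega>))\<^sup>2)"
    and int3: "\<And>i. i \<in> {1..m} \<Longrightarrow> integrable M (\<lambda>\<omega>. \<bar>log B (P i 1 \<omega>)\<bar> ^ 3)"
    and mean: "\<And>i. i \<in> {1..m} \<Longrightarrow> prob_space.expectation M (\<lambda>\<omega>. log B (P i 1 \<omega>)) = \<mu>"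
    and var: "\<And>i. i \<in> {1..m} \<Longrightarrow> prob_space.variance M (\<lambda>\<omega>. log B (P i 1 \<omega>)) = \<sigma>\<^sup>2"
    and "\<sigma> > 0"
    and benf_max: "strong_benford M B (\<lambda>n \<omega>. max_d m d (side a b P n \<omega>))"
  shows "strong_benford M B (\<lambda>n \<omega>. vol_d m d (side a b P n \<omega>))"
proof -
  interpret prob_space M
    by fact
  define S where "S = {I. I \<subseteq> {1..m} \<and> card I = d}"
  have fin: "finite S"
    unfolding S_def by (rule finite_subset[of _ "Pow {1..m}"]) auto
  have ne: "S \<noteq> {}"
    using \<open>d \<le> m\<close> by (auto simp: S_def intro!: exI[of _ "{1..d}"])
  have pos: "(\<Prod>i\<in>I. side a b P n \<omega> i) > 0" if "I \<in> S" "\<omega> \<in> space M" for I n \<omega>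
    using that box range unfolding S_def side_def by (intro prod_pos mult_pos_pos) auto
  have P_meas: "P i t \<in> borel_measurable M" if "i \<in> {1..m}" "t \<ge> 1" for i t
    using distributed_measurable[OF distr[OF that]] by (simp add: measurable_lborel1)
  have meas: "(\<lambda>\<omega>. \<Prod>i\<in>I. side a b P n \<omega> i) \<in> borel_measurable M" if "I \<in> S" for I n
    using that unfolding S_def side_def
    by (intro borel_measurable_prod borel_measurable_times borel_measurable_const P_meas) auto
  have sep: "(\<lambda>n. prob {\<omega>\<in>space M.
      \<bar>log B (\<Prod>i\<in>I. side a b P n \<omega> i) - log B (\<Prod>i\<in>J. side a b P n \<omega> i)\<bar> \<le> K}) \<longlonglongrightarrow> 0"
    if "I \<in> S" "J \<in> S" "I \<noteq> J" for I J K
    using that unfolding S_def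
    by (intro tendsto_prob_log_ratio_side_prods_bounded[OF \<open>prob_space M\<close> box range distr indep int2 mean var
          \<open>\<sigma> > 0\<close>]) auto
  have "strong_benford M B (\<lambda>n \<omega>. 2 ^ (m - d) * (\<Sum>I\<in>S. \<Prod>i\<in>I. side a b P n \<omega> i))"
    using benf_max unfolding max_d_def S_def[symmetric]
    by (intro strong_benford_scaled_sum_if_Max[OF \<open>B > 1\<close> fin ne pos meas sep]) auto
  then show ?thesis
    unfolding vol_d_def S_def .
qed

end
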